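(* Under the derivation $d/dt_1=d/dt_{1,1}+d/dt_{2,1}$ one has $$\frac{du}{dt_1}=\partial_1^3(u)+\partial_2^3(u)+3\partial_1(v_0u)+3\partial_2(w_0u),$$ $$\frac{dv_0}{dt_1}=\partial_1^3(v_0)+\partial_2^3(v_0)+6v_0\partial_1(v_0)+3\partial_1(uw_0)+3\partial_1(v_1),$$ and moreover $\partial_2(v_0)=\partial_1(u)$, $\partial_1(w_0)=\partial_2(u)$, where $w_0=\tau(v_0)$. Consequently, setting $v=3v_0$ (so $\tau(v)=3w_0$), $u$ satisfies the Novikov–Veselov equation $\frac{du}{dt_1}=\partial_1^3u+\partial_2^3u+\partial_1(uv)+\partial_2(u\,\tau(v))$ with $3\partial_1u=\partial_2v$.
   Context: Let $\mathcal{A}$ be the commutative $\mathbb{C}$-algebra of differential polynomials generated by $u$, $(v_i)_{i\ge0}$, $(w_j)_{j\ge0}$ and their jets under two commuting derivations $\partial_1,\partial_2$, subject to $\partial_2(\mathcal{L}_1)=[\mathcal{L}_1,\partial_1^{-1}u]$ and $\partial_1(\mathcal{L}_2)=[\mathcal{L}_2,\partial_2^{-1}u]$, where $\mathcal{L}_1=\partial_1^{-1}(\partial_1^2+v_0+\partial_1^{-1}v_1\partial_1^{-1}+\cdots)$, $\mathcal{L}_2=\partial_2^{-1}(\partial_2^2+w_0+\partial_2^{-1}w_1\partial_2^{-1}+\cdots)$, with $\partial_2(\mathcal{L}_1)$ (resp. $\partial_1(\mathcal{L}_2)$) meaning the derivation applied coefficientwise. Adjoint: anti-automorphism with $\partial_i^*=-\partial_i$,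 $a^*=a$. $\mathcal{H}=\partial_1\partial_2+u$, $A_{i,n}=(\mathcal{L}_i^{2n+1})_+$ (nonnegative-power part). For $\mathcal{P}\in\mathcal{A}[\partial_2]((\partial_1^{-1}))$, "$\mathcal{P}\ \mathrm{mod}\ \mathcal{H}$" is the unique element of $\mathcal{A}((\partial_1^{-1}))$ of the form $\mathcal{P}-\mathcal{Q}\mathcal{H}$, $\mathcal{Q}\in\mathcal{A}[\partial_2]((\partial_1^{-1}))$ (symmetrically with $1,2$ swapped). The $d/dt_{i,n}$ are the evolutionary derivations of $\mathcal{A}$ (commuting with $\partial_1,\partial_2$) defined by $d\mathcal{L}_i/dt_{i,n}=[A_{i,n},\mathcal{L}_i]$, $d\mathcal{L}_1/dt_{2,n}=[A_{2,n},\mathcal{L}_1]\ \mathrm{mod}\ \mathcal{H}$, $d\mathcal{L}_2/dt_{1,n}=[A_{1,n},\mathcal{L}_2]\ \mathrm{mod}\ \mathcal{H}$, $du/dt_{i,n}=-A_{i,n}^*(u)$. $\tau$ is the $\mathbb{R}$-algebra involution of $\mathcal{A}$ conjugating scalars and sending $\partial_1^n(v_i)\mapsto\partial_2^n(w_i)$, $\partial_2^n(w_j)\mapsto\partial_1^n(v_j)$, $\partial_1^p\partial_2^q(u)\mapsto\partial_1^q\partial_2^p(u)$. *)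

theory Defs
  imports Complex_Main
begin

text \<open>
  An element of  A[\<partial>_a]((\<partial>_b^{-1}))  is encoded as a function
  P :: nat \<Rightarrow> int \<Rightarrow> 'a, where  P j m  is the coefficient of  \<partial>_a^j \<partial>_b^m,
  coefficients written on the LEFT (normal form  sum  P j m \<partial>_a^j \<partial>_b^m).
  Here \<partial>_a (polynomial variable) acts on A by the derivation da and
  \<partial>_b (pseudo-differential variable) by db.
  The ring  A[\<partial>_2]((\<partial>_1^{-1}))  is obtained with (da,db) = (d2,d1),
  the ring  A[\<partial>_1]((\<partial>_2^{-1}))  with (da,db) = (d1,d2).
\<close>

definition ibinom :: "int \<Rightarrow> nat \<Rightarrow> int" where
  "ibinom m k = (\<Prod>i<k. m - int i) div fact k"

type_synonym 'a mop = "nat \<Rightarrow> int \<Rightarrow> 'a"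

definition admissible :: "('a::zero) mop \<Rightarrow> bool" where
  "admissible P \<longleftrightarrow> (\<exists>J. \<forall>j>J. \<forall>m. P j m = 0) \<and> (\<exists>M::int. \<forall>j m. M < m \<longrightarrow> P j m = 0)"

definition degA :: "('a::zero) mop \<Rightarrow> nat" where
  "degA P = (SOME J. \<forall>j>J. \<forall>m. P j m = 0)"

definition ordB :: "('a::zero) mop \<Rightarrow> int" where
  "ordB P = (SOME M. \<forall>j m. M < m \<longrightarrow> P j m = 0)"

text \<open>Product, using  \<partial>_a^j \<partial>_b^m \<circ> c =
  sum_{s,k} (j choose s) binom(m,k) da^s(db^k c) \<partial>_a^(j-s) \<partial>_b^(m-k).\<close>
definition mmul :: "('a::comm_ring_1 \<Rightarrow> 'a) \<Rightarrow> ('a \<Rightarrow> 'a) \<Rightarrow> 'a mop \<Rightarrow> 'a mop \<Rightarrow> 'a mop" where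
  "mmul da db P Q = (\<lambda>(j::nat) (r::int).
     \<Sum>j1\<in>{0..degA P}. \<Sum>s\<in>{0..j1}. \<Sum>j2\<in>{0..degA Q}.
     \<Sum>m1\<in>{r - ordB Q..ordB P}. \<Sum>m2\<in>{r - ordB P..ordB Q}.
       (if j1 + j2 = j + s \<and> r \<le> m1 + m2 then
          of_nat (j1 choose s) * of_int (ibinom m1 (nat (m1 + m2 - r))) * P j1 m1 *
          (da ^^ s) ((db ^^ nat (m1 + m2 - r)) (Q j2 m2))
        else 0))"

definition madd :: "('a::ab_group_add) mop \<Rightarrow> 'a mop \<Rightarrow> 'a mop" where
  "madd P Q = (\<lambda>j m. P j m + Q j m)"

definition msub :: "('a::ab_group_add) mop \<Rightarrow> 'a mop \<Rightarrow> 'a mop" where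
  "msub P Q = (\<lambda>j m. P j m - Q j m)"

definition mcomm :: "('a::comm_ring_1 \<Rightarrow> 'a) \<Rightarrow> ('a \<Rightarrow> 'a) \<Rightarrow> 'a mop \<Rightarrow> 'a mop \<Rightarrow> 'a mop" where
  "mcomm da db P Q = msub (mmul da db P Q) (mmul da db Q P)"

definition mconst :: "'a::zero \<Rightarrow> 'a mop" where
  "mconst a = (\<lambda>j m. if j = 0 \<and> m = 0 then a else 0)"

definition monoB :: "int \<Rightarrow> ('a::{zero,one}) mop" where
  "monoB n = (\<lambda>j m. if j = 0 \<and> m = n then 1 else 0)"

definition monoA :: "nat \<Rightarrow> ('a::{zero,one}) mop" where
  "monoA n = (\<lambda>j m. if j = n \<and> m = 0 then 1 else 0)"

definition mmap :: "('a \<Rightarrow> 'a) \<Rightarrow> 'a mop \<Rightarrow> 'a mop" where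
  "mmap f P = (\<lambda>j m. f (P j m))"

definition mplus :: "('a::zero) mop \<Rightarrow> 'a mop" where
  "mplus P = (\<lambda>j m. if 0 \<le> m then P j m else 0)"

text \<open>A differential operator  sum_m a_m \<partial>_b^m  (j = 0, m \<ge> 0) viewed as an
  element of the other ring, i.e. as a polynomial  sum_m a_m \<partial>^m  in the
  polynomial variable.\<close>
definition mtransp :: "('a::zero) mop \<Rightarrow> 'a mop" where
  "mtransp P = (\<lambda>j m. if m = 0 then P 0 (int j) else 0)"

text \<open>L = \<partial>^{-1}(\<partial>^2 + sum_{i\<ge>0} \<partial>^{-i} c_i \<partial>^{-i})
       = \<partial> + sum_i \<partial>^{-i-1} c_i \<partial>^{-i}; the term with index i only contributes
  to orders \<le> -2i-1, so the sum defining each coefficient is finite.\<close>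
definition Lop :: "('a::comm_ring_1 \<Rightarrow> 'a) \<Rightarrow> ('a \<Rightarrow> 'a) \<Rightarrow> (nat \<Rightarrow> 'a) \<Rightarrow> 'a mop" where
  "Lop da db c = (\<lambda>(j::nat) (r::int). monoB 1 j r +
     (\<Sum>i\<in>{0..nat (- r)}.
        mmul da db (mmul da db (monoB (- int i - 1)) (mconst (c i))) (monoB (- int i)) j r))"

definition Hop :: "'a::comm_ring_1 \<Rightarrow> 'a mop" where
  "Hop u = madd (\<lambda>j m. if j = 1 \<and> m = 1 then 1 else 0) (mconst u)"

definition is_modH :: "('a::comm_ring_1 \<Rightarrow> 'a) \<Rightarrow> ('a \<Rightarrow> 'a) \<Rightarrow> 'a \<Rightarrow> 'a mop \<Rightarrow> 'a mop \<Rightarrow> bool" where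
  "is_modH da db u P R \<longleftrightarrow> admissible R \<and> (\<forall>j>0. \<forall>m. R j m = 0) \<and>
     (\<exists>Q. admissible Q \<and> msub P R = mmul da db Q (Hop u))"

text \<open>A^*(f) for a differential operator A = sum_m a_m \<partial>^m (j = 0, m \<ge> 0):
  A^* = sum_m (-\<partial>)^m \<circ> a_m, so A^*(f) = sum_m (-1)^m \<partial>^m (a_m f).\<close>
definition adj_apply :: "('a::comm_ring_1 \<Rightarrow> 'a) \<Rightarrow> 'a mop \<Rightarrow> 'a \<Rightarrow> 'a" where
  "adj_apply db P f = (\<Sum>m\<in>{0..nat (ordB P)}. (-1) ^ m * (db ^^ m) (P 0 (int m) * f))"

definition is_derivation :: "('a::{comm_ring_1,real_algebra_1} \<Rightarrow> 'a) \<Rightarrow> bool" where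
  "is_derivation D \<longleftrightarrow> (\<forall>x y. D (x + y) = D x + D y) \<and> (\<forall>x y. D (x * y) = D x * y + x * D y)
     \<and> (\<forall>c x. D (c *\<^sub>R x) = c *\<^sub>R D x)"

end

theory Submission
  imports Defs
begin

text \<open>
  Every identity is read off from finitely many low-order coefficients.  Since
  \<open>\<L> = \<partial> + v\<^sub>0 \<partial>\<^sup>-\<^sup>1 - \<partial>(v\<^sub>0) \<partial>\<^sup>-\<^sup>2 + \<dots>\<close>, one finds \<open>A = (\<L>\<^sup>3)\<^sub>+ = \<partial>\<^sup>3 + 3 v\<^sub>0 \<partial>\<close>, so
  \<open>-A\<^sup>*(u) = \<partial>\<^sup>3 u + 3 \<partial>(v\<^sub>0 u)\<close>; the \<open>\<partial>\<^sup>-\<^sup>1\<close>-coefficients of the Lax equations give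
  \<open>\<partial>\<^sub>2 v\<^sub>0 = \<partial>\<^sub>1 u\<close> and the evolution of \<open>v\<^sub>0\<close> under \<open>t\<^sub>1\<^sub>,\<^sub>1\<close>.  For the flow \<open>t\<^sub>2\<^sub>,\<^sub>1\<close>
  acting on \<open>\<L>\<^sub>1\<close>, write \<open>P - R = Q H\<close> with \<open>H = \<partial>\<^sub>1\<partial>\<^sub>2 + u\<close>: as \<open>P\<close> is of degree at
  most one in \<open>\<partial>\<^sub>2\<close> in nonnegative \<open>\<partial>\<^sub>1\<close>-orders, triangularity of multiplication by
  \<open>H\<close> forces \<open>Q\<close> to vanish there too, and the \<open>\<partial>\<^sub>1\<^sup>-\<^sup>1\<close>-coefficient of the remainder
  is \<open>P\<^sub>0\<^sub>,\<^sub>-\<^sub>1 - P\<^sub>1\<^sub>,\<^sub>0 u\<close>.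
\<close>

definition mop_bounded :: "nat \<Rightarrow> int \<Rightarrow> ('a::zero) mop \<Rightarrow> bool" where
  "mop_bounded J M P \<longleftrightarrow> (\<forall>j>J. \<forall>m. P j m = 0) \<and> (\<forall>j m. M < m \<longrightarrow> P j m = 0)"

lemma admissible_imp_mop_bounded: "admissible P \<Longrightarrow> mop_bounded (degA P) (ordB P) P"
proof -
  assume "admissible P"
  then have deg: "\<exists>J. \<forall>j>J. \<forall>m. P j m = 0" and ord: "\<exists>M::int. \<forall>j m. M < m \<longrightarrow> P j m = 0"
    unfolding admissible_def by auto
  show ?thesis
    unfolding mop_bounded_def degA_def ordB_def using someI_ex[OF deg] someI_ex[OF ord] by blast
qed

lemma mop_bounded_imp_admissible: "mop_bounded J M P \<Longrightarrow> admissible P"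
  unfolding mop_bounded_def admissible_def by blast

lemma sum_cong_support:
  assumes "finite A" "finite B" "\<And>x. g x \<noteq> 0 \<Longrightarrow> x \<in> A \<inter> B"
  shows "sum g A = sum g B"
  by (rule sum.mono_neutral_cong) (use assms in auto)

lemma funpow_fixpoint: "f x = x \<Longrightarrow> (f ^^ n) x = x"
  by (induction n) auto

lemma funpow_into_fixpoint: "f x = y \<Longrightarrow> f y = y \<Longrightarrow> 0 < n \<Longrightarrow> (f ^^ n) x = y"
proof (induction n)
  case (Suc n)
  then show ?case by (cases n) auto
qed simp

lemma funpow_funpow_one:
  fixes f g :: "'a::{zero,one} \<Rightarrow> 'a"
  assumes "f 0 = 0" "f 1 = 0" "g 0 = 0" "g 1 = 0"
  shows "(f ^^ s) ((g ^^ k) 1) = (if s = 0 \<and> k = 0 then 1 else 0)"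
  using assms funpow_into_fixpoint[of f 1 0 s] funpow_into_fixpoint[of g 1 0 k]
    funpow_fixpoint[of f 0 s]
  by (cases "k = 0"; cases "s = 0") auto

lemma atLeastAtMost_int_empty: "b < a \<Longrightarrow> {a..b::int} = {}"
  by auto

lemma atLeastAtMost_int_insert_lower: "a \<le> b \<Longrightarrow> {a..b::int} = insert a {a+1..b}"
  by auto

section \<open>The product of mixed operators as a finite sum\<close>

definition mmul_term ::
  "('a::comm_ring_1 \<Rightarrow> 'a) \<Rightarrow> ('a \<Rightarrow> 'a) \<Rightarrow> 'a mop \<Rightarrow> 'a mop \<Rightarrow> nat \<Rightarrow> int \<Rightarrow>
    nat \<times> nat \<times> nat \<times> int \<times> int \<Rightarrow> 'a" where
  "mmul_term da db P Q j r = (\<lambda>(j1, s, j2, m1, m2).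
     if j1 + j2 = j + s \<and> r \<le> m1 + m2 then
       of_nat (j1 choose s) * of_int (ibinom m1 (nat (m1 + m2 - r))) * P j1 m1 *
       (da ^^ s) ((db ^^ nat (m1 + m2 - r)) (Q j2 m2))
     else 0)"

definition mmul_index :: "nat \<Rightarrow> int \<Rightarrow> nat \<Rightarrow> int \<Rightarrow> int \<Rightarrow> (nat \<times> nat \<times> nat \<times> int \<times> int) set" where
  "mmul_index J1 M1 J2 M2 r =
     (SIGMA j1:{0..J1}. SIGMA s:{0..j1}. SIGMA j2:{0..J2}. {r - M2..M1} \<times> {r - M1..M2})"

lemma finite_mmul_index [simp]: "finite (mmul_index J1 M1 J2 M2 r)"
  unfolding mmul_index_def by (intro finite_SigmaI finite_cartesian_product) auto

lemma sum_mmul_index: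
  "sum g (mmul_index J1 M1 J2 M2 r) =
    (\<Sum>j1\<in>{0..J1}. \<Sum>s\<in>{0..j1}. \<Sum>j2\<in>{0..J2}. \<Sum>m1\<in>{r - M2..M1}. \<Sum>m2\<in>{r - M1..M2}.
       g (j1, s, j2, m1, m2))"
  unfolding mmul_index_def by (simp add: sum.Sigma sum.cartesian_product split_def)

lemma mmul_eq_sum_mmul_term:
  "mmul da db P Q j r = sum (mmul_term da db P Q j r) (mmul_index (degA P) (ordB P) (degA Q) (ordB Q) r)"
  unfolding sum_mmul_index mmul_def mmul_term_def by simp

lemma mmul_term_support:
  assumes "mop_bounded J1 M1 P" "mop_bounded J2 M2 Q" "da 0 = 0" "db 0 = 0"
    and "mmul_term da db P Q j r t \<noteq> 0"
  shows "t \<in> mmul_index J1 M1 J2 M2 r"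
proof -
  obtain j1 s j2 m1 m2 where t: "t = (j1, s, j2, m1, m2)" by (cases t) auto
  note nz = assms(5)[unfolded t mmul_term_def, simplified]
  have orders: "j1 + j2 = j + s" "r \<le> m1 + m2" using nz by (auto split: if_splits)
  have "s \<le> j1"
    using nz by (cases "s \<le> j1") (auto simp: binomial_eq_0 split: if_splits)
  moreover have "P j1 m1 \<noteq> 0" using nz by (auto split: if_splits)
  moreover have "Q j2 m2 \<noteq> 0"
    using nz funpow_fixpoint[of da 0] funpow_fixpoint[of db 0] assms(3,4) by (auto split: if_splits)
  ultimately show ?thesis
    using assms(1,2) orders unfolding t mmul_index_def mop_bounded_def by (auto simp: not_le[symmetric])
qed

lemma mmul_eq_sum_over:
  assumes "admissible P" "admissible Q" "da 0 = 0" "db 0 = 0" "finite T"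
    "\<And>t. mmul_term da db P Q j r t \<noteq> 0 \<Longrightarrow> t \<in> T"
  shows "mmul da db P Q j r = sum (mmul_term da db P Q j r) T"
  unfolding mmul_eq_sum_mmul_term
  by (rule sum_cong_support)
     (use assms mmul_term_support[where da=da and db=db, OF admissible_imp_mop_bounded admissible_imp_mop_bounded] in auto)

lemma mmul_eq_sum_bounded:
  assumes "mop_bounded J1 M1 P" "mop_bounded J2 M2 Q" "da 0 = 0" "db 0 = 0"
  shows "mmul da db P Q j r = sum (mmul_term da db P Q j r) (mmul_index J1 M1 J2 M2 r)"
  by (rule mmul_eq_sum_over)
     (use assms mmul_term_support[where da=da and db=db, OF assms] mop_bounded_imp_admissible in auto)

lemma mop_bounded_mmul:
  assumes "mop_bounded J1 M1 P" "mop_bounded J2 M2 Q" "da 0 = 0" "db 0 = 0"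
  shows "mop_bounded (J1 + J2) (M1 + M2) (mmul da db P Q)"
proof -
  have "mmul da db P Q j r = 0" if "J1 + J2 < j \<or> M1 + M2 < r" for j r
  proof -
    have "mmul_term da db P Q j r t = 0" if "t \<in> mmul_index J1 M1 J2 M2 r" for t
      using that \<open>J1 + J2 < j \<or> M1 + M2 < r\<close>
      by (auto simp: mmul_index_def mmul_term_def)
    then show ?thesis
      unfolding mmul_eq_sum_bounded[where da=da and db=db, OF assms] by simp
  qed
  then show ?thesis
    unfolding mop_bounded_def by auto
qed

lemma mop_bounded_monoB: "mop_bounded 0 n (monoB n)"
  unfolding mop_bounded_def monoB_def by auto

lemma mop_bounded_mconst: "mop_bounded 0 0 (mconst a)"
  unfolding mop_bounded_def mconst_def by auto

lemma mop_bounded_Hop: "mop_bounded 1 1 (Hop u)"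
  unfolding mop_bounded_def Hop_def madd_def mconst_def by auto

lemma mmul_monoB_mconst:
  assumes "da 0 = 0" "db 0 = 0"
  shows "mmul da db (monoB n) (mconst a) j r =
    (if j = 0 \<and> r \<le> n then of_int (ibinom n (nat (n - r))) * (db ^^ nat (n - r)) a else 0)"
proof -
  have "mmul da db (monoB n) (mconst a) j r =
      sum (mmul_term da db (monoB n) (mconst a) j r) {(0, 0, 0, n, 0)}"
  proof (rule mmul_eq_sum_over)
    fix t assume nz: "mmul_term da db (monoB n) (mconst a) j r t \<noteq> 0"
    obtain j1 s j2 m1 m2 where t: "t = (j1, s, j2, m1, m2)" by (cases t) auto
    show "t \<in> {(0, 0, 0, n, 0)}"
      using nz assms funpow_fixpoint[of da 0] funpow_fixpoint[of db 0]
      by (auto simp: t mmul_term_def monoB_def mconst_def split: if_splits)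
  qed (use assms mop_bounded_imp_admissible[OF mop_bounded_monoB]
         mop_bounded_imp_admissible[OF mop_bounded_mconst] in auto)
  then show ?thesis by (simp add: mmul_term_def monoB_def mconst_def)
qed

lemma mmul_monoB_right:
  assumes "mop_bounded J M X" "da 0 = 0" "db 0 = 0" "da 1 = 0" "db 1 = 0"
  shows "mmul da db X (monoB m) j r = X j (r - m)"
proof -
  have "mmul da db X (monoB m) j r = sum (mmul_term da db X (monoB m) j r) {(j, 0, 0, r - m, m)}"
  proof (rule mmul_eq_sum_over)
    fix t assume nz: "mmul_term da db X (monoB m) j r t \<noteq> 0"
    obtain j1 s j2 m1 m2 where t: "t = (j1, s, j2, m1, m2)" by (cases t) auto
    show "t \<in> {(j, 0, 0, r - m, m)}"
      using nz funpow_fixpoint[of da 0] funpow_fixpoint[of db 0] assms(2,3)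
        funpow_funpow_one[of da db, OF assms(2,4,3,5)]
      by (auto simp: t mmul_term_def monoB_def split: if_splits)
  qed (use assms mop_bounded_imp_admissible[OF mop_bounded_monoB] mop_bounded_imp_admissible in auto)
  then show ?thesis by (simp add: mmul_term_def monoB_def ibinom_def)
qed

lemma Lop_eq:
  assumes "da 0 = 0" "db 0 = 0" "da 1 = 0" "db 1 = 0"
  shows "Lop da db c j r =
    (if j = 0 then
       (if r = 1 then 1 else 0) +
       (\<Sum>i\<in>{0..nat (- r)}.
          if r + int i \<le> - int i - 1 then
            of_int (ibinom (- int i - 1) (nat (- 2 * int i - 1 - r))) *
            (db ^^ nat (- 2 * int i - 1 - r)) (c i)
          else 0)
     else 0)"
proof -
  have "mmul da db (mmul da db (monoB (- int i - 1)) (mconst (c i))) (monoB (- int i)) j r =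
    (if j = 0 \<and> r + int i \<le> - int i - 1 then
       of_int (ibinom (- int i - 1) (nat (- 2 * int i - 1 - r))) *
       (db ^^ nat (- 2 * int i - 1 - r)) (c i)
     else 0)" for i
  proof -
    have bounded: "mop_bounded (0 + 0) (- int i - 1 + 0) (mmul da db (monoB (- int i - 1)) (mconst (c i)))"
      by (rule mop_bounded_mmul[where da=da and db=db, OF mop_bounded_monoB mop_bounded_mconst assms(1,2)])
    have order: "- int i - 1 - (r - - int i) = - 2 * int i - 1 - r" by simp
    show ?thesis
      unfolding mmul_monoB_right[where da=da and db=db, OF bounded assms]
        mmul_monoB_mconst[where da=da and db=db, OF assms(1,2)] order
      by auto
  qed
  then show ?thesis unfolding Lop_def by (auto simp: monoB_def)
qed

lemma mop_bounded_Lop: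
  assumes "da 0 = 0" "db 0 = 0" "da 1 = 0" "db 1 = 0"
  shows "mop_bounded 0 1 (Lop da db c)"
  unfolding mop_bounded_def Lop_eq[where da=da and db=db, OF assms] by auto

lemma Lop_coeffs:
  assumes "da 0 = 0" "db 0 = 0" "da 1 = 0" "db 1 = 0"
  shows "Lop da db c 0 1 = 1" "Lop da db c 0 0 = 0" "Lop da db c 0 (-1) = c 0"
    "Lop da db c 0 (-2) = - db (c 0)" "Lop da db c 0 (-3) = db (db (c 0)) + c 1"
  by (simp_all add: Lop_eq[where da=da and db=db, OF assms] ibinom_def numeral_eq_Suc atLeast0_atMost_Suc lessThan_Suc)

section \<open>Remainders modulo \<open>H\<close>\<close>

lemma mmul_Hop_coeff:
  assumes bounded: "mop_bounded JQ MQ Q" and const: "da 0 = 0" "db 0 = 0" "da 1 = 0" "db 1 = 0"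
    and vanish: "\<And>j' m'. j \<le> j' \<Longrightarrow> r \<le> m' \<Longrightarrow> (j', m') \<noteq> (j, r) \<Longrightarrow> Q j' m' = 0"
  shows "mmul da db Q (Hop u) j r = (if 1 \<le> j then Q (j - 1) (r - 1) else 0) + Q j r * u"
proof -
  have "mmul da db Q (Hop u) j r =
      sum (mmul_term da db Q (Hop u) j r) {(j - 1, 0, 1, r - 1, 1), (j, 0, 0, r, 0)}"
  proof (rule mmul_eq_sum_over)
    fix t assume nz: "mmul_term da db Q (Hop u) j r t \<noteq> 0"
    obtain j1 s j2 m1 m2 where t: "t = (j1, s, j2, m1, m2)" by (cases t) auto
    note nz' = nz[unfolded t mmul_term_def, simplified]
    have orders: "j1 + j2 = j + s" "r \<le> m1 + m2" using nz' by (auto split: if_splits)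
    have nzH: "(da ^^ s) ((db ^^ nat (m1 + m2 - r)) (Hop u j2 m2)) \<noteq> 0" and nzQ: "Q j1 m1 \<noteq> 0"
      using nz' by (auto split: if_splits)
    consider "j2 = 1 \<and> m2 = 1" | "j2 = 0 \<and> m2 = 0" | "Hop u j2 m2 = 0"
      by (cases "j2 = 1 \<and> m2 = 1"; cases "j2 = 0 \<and> m2 = 0") (auto simp: Hop_def madd_def mconst_def)
    then show "t \<in> {(j - 1, 0, 1, r - 1, 1), (j, 0, 0, r, 0)}"
    proof cases
      case 1
      then have "s = 0 \<and> nat (m1 + m2 - r) = 0"
        using nzH funpow_funpow_one[of da db, OF const(1,3,2,4)]
        by (auto simp: Hop_def madd_def mconst_def split: if_splits)
      then show ?thesis using 1 orders t by auto
    next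
      case 2
      then have "j \<le> j1" "r \<le> m1" using orders by auto
      then have "(j1, m1) = (j, r)" using vanish nzQ by blast
      then show ?thesis using 2 orders t by auto
    next
      case 3
      then show ?thesis using nzH funpow_fixpoint[of da 0] funpow_fixpoint[of db 0] const by auto
    qed
  qed (use bounded mop_bounded_Hop mop_bounded_imp_admissible const in auto)
  also have "\<dots> = (if 1 \<le> j then Q (j - 1) (r - 1) else 0) + Q j r * u"
    by (simp add: mmul_term_def ibinom_def Hop_def madd_def mconst_def)
  finally show ?thesis .
qed

text \<open>Descending induction on the \<open>\<partial>\<^sub>b\<close>-order, starting above the order bound of \<open>Q\<close>:
  the coefficient of \<open>Q H\<close> at \<open>(j + 1, m + 1)\<close> is \<open>Q\<^sub>j\<^sub>,\<^sub>m\<close> plus terms already known to vanish.\<close>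

lemma Hop_quotient_vanishes:
  assumes bounded: "mop_bounded JQ MQ Q" and const: "da 0 = 0" "db 0 = 0" "da 1 = 0" "db 1 = 0"
    and product_vanishes: "\<And>j r. 2 \<le> j \<Longrightarrow> 0 \<le> r \<Longrightarrow> mmul da db Q (Hop u) j r = 0"
    and "1 \<le> j" "-1 \<le> m"
  shows "Q j m = 0"
proof -
  have "\<forall>m j. 1 \<le> j \<longrightarrow> -1 \<le> m \<longrightarrow> MQ - int n < m \<longrightarrow> Q j m = 0" for n
  proof (induction n)
    case 0
    then show ?case using bounded unfolding mop_bounded_def by auto
  next
    case (Suc n)
    show ?case
    proof (intro allI impI)
      fix m :: int and j :: nat
      assume j: "1 \<le> j" and m: "-1 \<le> m" and above: "MQ - int (Suc n) < m"
      show "Q j m = 0"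
      proof (cases "MQ - int n < m")
        case True
        then show ?thesis using Suc j m by auto
      next
        case False
        have "mmul da db Q (Hop u) (j + 1) (m + 1) = Q j m + Q (j + 1) (m + 1) * u"
          by (subst mmul_Hop_coeff[OF bounded const]) (use Suc False above m in auto)
        moreover have "Q (j + 1) (m + 1) = 0" using Suc False above m by auto
        ultimately show ?thesis using product_vanishes[of "j + 1" "m + 1"] j m by simp
      qed
    qed
  qed
  from this[of "nat (MQ - m) + 1"] show ?thesis using assms(7,8) by auto
qed

lemma coeff_mod_Hop:
  assumes const: "da 0 = 0" "db 0 = 0" "da 1 = 0" "db 1 = 0"
    and mod: "is_modH da db u P R"
    and P_high: "\<And>j r. 2 \<le> j \<Longrightarrow> 0 \<le> r \<Longrightarrow> P j r = 0"
    and P_one: "\<And>r. 1 \<le> r \<Longrightarrow> P 1 r = 0"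
  shows "R 0 (-1) = P 0 (-1) - P 1 0 * u"
proof -
  obtain Q where "admissible Q" and quotient: "msub P R = mmul da db Q (Hop u)"
    and R_const: "\<And>j m. 0 < j \<Longrightarrow> R j m = 0"
    using mod unfolding is_modH_def by blast
  then have bounded: "mop_bounded (degA Q) (ordB Q) Q"
    by (simp add: admissible_imp_mop_bounded)
  have coeff: "P j r - R j r = mmul da db Q (Hop u) j r" for j r
    using fun_cong[OF fun_cong[OF quotient, of j], of r] unfolding msub_def by simp
  note Hop_coeff = mmul_Hop_coeff[OF bounded const]
  have Q_vanishes: "Q j m = 0" if "1 \<le> j" "-1 \<le> m" for j m
  proof (rule Hop_quotient_vanishes[OF bounded const _ that])
    show "mmul da db Q (Hop u) j r = 0" if "2 \<le> j" "0 \<le> r" for j :: nat and r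
      using coeff[of j r] P_high[OF that] R_const[of j r] that by simp
  qed
  have Q_zero: "Q 0 m = 0" if "0 \<le> m" for m
  proof -
    have "mmul da db Q (Hop u) 1 (m + 1) = Q 0 m + Q 1 (m + 1) * u"
      by (subst Hop_coeff) (use Q_vanishes that in auto)
    then show ?thesis using coeff[of 1 "m + 1"] P_one[of "m + 1"] R_const[of 1] Q_vanishes[of 1 "m + 1"] that
      by simp
  qed
  have "mmul da db Q (Hop u) 1 0 = Q 0 (-1) + Q 1 0 * u"
    by (subst Hop_coeff) (use Q_vanishes in auto)
  then have Q_minus_one: "Q 0 (-1) = P 1 0"
    using coeff[of 1 0] R_const[of 1] Q_vanishes[of 1 0] by simp
  have "mmul da db Q (Hop u) 0 (-1) = Q 0 (-1) * u"
  proof (subst Hop_coeff)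
    fix j' :: nat and m' :: int assume "0 \<le> j'" "-1 \<le> m'" "(j', m') \<noteq> (0, -1)"
    then show "Q j' m' = 0" using Q_vanishes Q_zero by (cases "j' = 0") auto
  qed simp
  then show ?thesis using coeff[of 0 "-1"] Q_minus_one by (simp add: algebra_simps)
qed

context
  fixes D :: "'a::{comm_ring_1,real_algebra_1} \<Rightarrow> 'a"
  assumes derivation: "is_derivation D"
begin

lemma derivation_add: "D (x + y) = D x + D y"
  using derivation unfolding is_derivation_def by blast

lemma derivation_mult: "D (x * y) = D x * y + x * D y"
  using derivation unfolding is_derivation_def by blast

lemma derivation_zero: "D 0 = 0"
  using derivation_add[of 0 0] by simp

lemma derivation_one: "D 1 = 0"
  using derivation_mult[of 1 1] by simp

lemma derivation_uminus: "D (- x) = - D x"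
  using derivation_add[of x "- x"] by (simp add: derivation_zero eq_neg_iff_add_eq_0 add.commute)

lemma derivation_diff: "D (x - y) = D x - D y"
  using derivation_add[of x "- y"] by (simp add: derivation_uminus)

lemma derivation_of_nat: "D (of_nat n) = 0"
  by (induction n) (simp_all add: derivation_zero derivation_add derivation_one)

lemma derivation_numeral: "D (numeral n) = 0"
  using derivation_of_nat[of "numeral n"] by simp

lemma derivation_of_int: "D (of_int k) = 0"
  by (cases k) (simp_all add: derivation_of_nat derivation_uminus derivation_diff derivation_one)

lemmas derivation_simps = derivation_add derivation_mult derivation_zero derivation_one
  derivation_uminus derivation_diff derivation_of_nat derivation_numeral derivation_of_int

end

section \<open>Low-order coefficients of the Lax operator\<close>

locale Lax_operator =
  fixes da db :: "'a::{comm_ring_1,real_algebra_1} \<Rightarrow> 'a" and c :: "nat \<Rightarrow> 'a"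
  assumes derivation_a: "is_derivation da" and derivation_b: "is_derivation db"
begin

lemma derivations_const: "da 0 = 0" "db 0 = 0" "da 1 = 0" "db 1 = 0"
  by (simp_all add: derivation_zero[OF derivation_a] derivation_zero[OF derivation_b]
      derivation_one[OF derivation_a] derivation_one[OF derivation_b])

abbreviation "L \<equiv> Lop da db c"
abbreviation "L_sq \<equiv> mmul da db L L"
abbreviation "L_cube \<equiv> mmul da db L_sq L"
abbreviation "A \<equiv> mplus L_cube"

lemmas L_coeffs = Lop_coeffs[where da=da and db=db, OF derivations_const]
lemmas L_bounded = mop_bounded_Lop[where da=da and db=db and c=c, OF derivations_const]
lemmas mmul_eq_sum = mmul_eq_sum_bounded[where da=da and db=db, OF _ _ derivations_const(1,2)]
lemmas coeff_simps = atLeastAtMost_int_empty atLeastAtMost_int_insert_lower mmul_term_def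
  ibinom_def numeral_eq_Suc lessThan_Suc derivation_simps[OF derivation_b]

lemma L_sq_bounded: "mop_bounded 0 2 L_sq"
  using mop_bounded_mmul[where da=da and db=db, OF L_bounded L_bounded derivations_const(1,2)] by simp

lemma L_sq_coeffs: "L_sq 0 (-1) = - db (c 0)" "L_sq 0 0 = 2 * c 0" "L_sq 0 1 = 0" "L_sq 0 2 = 1"
  unfolding mmul_eq_sum[OF L_bounded L_bounded] sum_mmul_index
  by (simp_all add: coeff_simps L_coeffs)

lemma L_cube_bounded: "mop_bounded 0 3 L_cube"
  using mop_bounded_mmul[where da=da and db=db, OF L_sq_bounded L_bounded derivations_const(1,2)] by simp

lemma L_cube_coeffs: "L_cube 0 0 = 0" "L_cube 0 1 = 3 * c 0" "L_cube 0 2 = 0" "L_cube 0 3 = 1"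
  unfolding mmul_eq_sum[OF L_sq_bounded L_bounded] sum_mmul_index
  by (simp_all add: coeff_simps L_coeffs L_sq_coeffs)

lemma A_bounded: "mop_bounded 0 3 A"
  using L_cube_bounded unfolding mop_bounded_def mplus_def by auto

lemma A_coeffs: "A 0 0 = 0" "A 0 1 = 3 * c 0" "A 0 2 = 0" "A 0 3 = 1" "A 0 (-1) = 0" "A 0 (-2) = 0"
  by (simp_all add: mplus_def L_cube_coeffs)

lemma coeff_mmap_L: "mmap f L 0 (-1) = f (c 0)"
  by (simp add: mmap_def L_coeffs)

lemma coeff_comm_A_L: "mcomm da db A L 0 (-1) = db (db (db (c 0))) + 6 * c 0 * db (c 0) + 3 * db (c 1)"
  unfolding mcomm_def msub_def mmul_eq_sum[OF A_bounded L_bounded] mmul_eq_sum[OF L_bounded A_bounded]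
    sum_mmul_index
  by (simp add: coeff_simps L_coeffs A_coeffs algebra_simps)

lemma adj_apply_A: "adj_apply db A f = - (3 * db (c 0) * f) - 3 * c 0 * db f - db (db (db f))"
proof -
  have "adj_apply db A f = (\<Sum>m\<in>{0..3}. (-1) ^ m * (db ^^ m) (A 0 (int m) * f))"
    unfolding adj_apply_def
  proof (rule sum_cong_support)
    fix m assume "(-1) ^ m * (db ^^ m) (A 0 (int m) * f) \<noteq> 0"
    then have nz: "A 0 (int m) \<noteq> 0" using funpow_fixpoint[of db 0 m] derivations_const by auto
    have "mop_bounded (degA A) (ordB A) A"
      using admissible_imp_mop_bounded[OF mop_bounded_imp_admissible[OF A_bounded]] .
    then have "\<not> 3 < int m" "\<not> ordB A < int m"
      using nz A_bounded unfolding mop_bounded_def by blast+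
    then show "m \<in> {0..nat (ordB A)} \<inter> {0..3}" by auto
  qed auto
  also have "\<dots> = - (3 * db (c 0) * f) - 3 * c 0 * db f - db (db (db f))"
    by (simp add: numeral_eq_Suc atLeast0_atMost_Suc A_coeffs derivation_simps[OF derivation_b])
  finally show ?thesis .
qed

lemma coeff_comm_L_inverse_u:
  "mcomm da db L (mmul da db (monoB (-1)) (mconst u)) 0 (-1) = db u"
proof -
  have bounded: "mop_bounded 0 (-1) (mmul da db (monoB (-1)) (mconst u))"
    using mop_bounded_mmul[where da=da and db=db, OF mop_bounded_monoB mop_bounded_mconst derivations_const(1,2)]
    by simp
  show ?thesis
    unfolding mcomm_def msub_def mmul_eq_sum[OF L_bounded bounded] mmul_eq_sum[OF bounded L_bounded]
      sum_mmul_index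
    by (simp add: coeff_simps L_coeffs mmul_monoB_mconst[where da=da and db=db, OF derivations_const(1,2)])
qed

lemma coeff_comm_transp_L:
  assumes B_bounded: "mop_bounded 0 3 B"
    and B_coeffs: "B 0 0 = 0" "B 0 1 = 3 * e" "B 0 2 = 0" "B 0 3 = 1"
  defines "P \<equiv> mcomm da db (mtransp B) L"
  shows "P 0 (-1) = 3 * e * da (c 0) + da (da (da (c 0)))" and "P 1 0 = - (3 * db e)"
    and "\<And>j r. 2 \<le> j \<Longrightarrow> 0 \<le> r \<Longrightarrow> P j r = 0" and "\<And>r. 1 \<le> r \<Longrightarrow> P 1 r = 0"
proof -
  have T_bounded: "mop_bounded 3 0 (mtransp B)"
    using B_bounded unfolding mop_bounded_def mtransp_def by auto
  have P_bounded: "mop_bounded 3 1 P"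
    using mop_bounded_mmul[where da=da and db=db, OF T_bounded L_bounded derivations_const(1,2)]
      mop_bounded_mmul[where da=da and db=db, OF L_bounded T_bounded derivations_const(1,2)]
    unfolding P_def mcomm_def msub_def mop_bounded_def by auto
  have T_coeffs: "mtransp B 0 0 = 0" "mtransp B (Suc 0) 0 = 3 * e"
    "mtransp B (Suc (Suc 0)) 0 = 0" "mtransp B (Suc (Suc (Suc 0))) 0 = 1"
    "\<And>j m. m \<noteq> 0 \<Longrightarrow> mtransp B j m = 0"
    using B_coeffs by (auto simp: mtransp_def)
  note P_sum = P_def mcomm_def msub_def mmul_eq_sum[OF T_bounded L_bounded]
    mmul_eq_sum[OF L_bounded T_bounded] sum_mmul_index
  have P_coeffs: "P 2 0 = 0" "P 2 1 = 0" "P 3 0 = 0" "P 3 1 = 0" "P 1 1 = 0"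
    "P 1 0 = - (3 * db e)" "P 0 (-1) = 3 * e * da (c 0) + da (da (da (c 0)))"
    unfolding P_sum by (simp_all add: coeff_simps L_coeffs T_coeffs derivation_simps[OF derivation_a])
  then show "P 0 (-1) = 3 * e * da (c 0) + da (da (da (c 0)))" and "P 1 0 = - (3 * db e)"
    by simp_all
  show "P j r = 0" if "2 \<le> j" "0 \<le> r" for j r
  proof (cases "j \<le> 3 \<and> r \<le> 1")
    case True
    then have "j = 2 \<or> j = 3" "r = 0 \<or> r = 1" using that by auto
    then show ?thesis using P_coeffs by auto
  next
    case False
    then show ?thesis using P_bounded unfolding mop_bounded_def by auto
  qed
  show "P 1 r = 0" if "1 \<le> r" for r
    using P_coeffs P_bounded that unfolding mop_bounded_def by (cases "r = 1") auto
qed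

lemma coeff_mod_Hop_comm_transp_L:
  assumes "mop_bounded 0 3 B" "B 0 0 = 0" "B 0 1 = 3 * e" "B 0 2 = 0" "B 0 3 = 1"
    and "is_modH da db u (mcomm da db (mtransp B) L) R"
  shows "R 0 (-1) = 3 * e * da (c 0) + da (da (da (c 0))) + 3 * db e * u"
  using coeff_mod_Hop[where da=da and db=db, OF derivations_const assms(6)]
    coeff_comm_transp_L[OF assms(1-5)]
  by simp

end

theorem mainTheorem9:
  fixes d1 d2 D11 D21 :: "'a::{comm_ring_1,real_algebra_1} \<Rightarrow> 'a"
    and u :: 'a and v w :: "nat \<Rightarrow> 'a"
  defines "L1 \<equiv> Lop d2 d1 v"
      and "L2 \<equiv> Lop d1 d2 w"
  defines "A11 \<equiv> mplus (mmul d2 d1 (mmul d2 d1 L1 L1) L1)"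
      and "A21 \<equiv> mplus (mmul d1 d2 (mmul d1 d2 L2 L2) L2)"
  assumes der1: "is_derivation d1" and der2: "is_derivation d2"
      and comm12: "\<And>x. d1 (d2 x) = d2 (d1 x)"
      and rel1: "mmap d2 L1 = mcomm d2 d1 L1 (mmul d2 d1 (monoB (-1)) (mconst u))"
      and rel2: "mmap d1 L2 = mcomm d1 d2 L2 (mmul d1 d2 (monoB (-1)) (mconst u))"
      and derD11: "is_derivation D11" and derD21: "is_derivation D21"
      and evol11: "\<And>x. D11 (d1 x) = d1 (D11 x)" "\<And>x. D11 (d2 x) = d2 (D11 x)"
      and evol21: "\<And>x. D21 (d1 x) = d1 (D21 x)" "\<And>x. D21 (d2 x) = d2 (D21 x)"
      and L1_11: "mmap D11 L1 = mcomm d2 d1 A11 L1"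
      and L2_21: "mmap D21 L2 = mcomm d1 d2 A21 L2"
      and L1_21: "is_modH d2 d1 u (mcomm d2 d1 (mtransp A21) L1) (mmap D21 L1)"
      and L2_11: "is_modH d1 d2 u (mcomm d1 d2 (mtransp A11) L2) (mmap D11 L2)"
      and u_11: "D11 u = - adj_apply d1 A11 u"
      and u_21: "D21 u = - adj_apply d2 A21 u"
  shows "D11 u + D21 u = (d1^^3) u + (d2^^3) u + 3 * d1 (v 0 * u) + 3 * d2 (w 0 * u)
    \<and> D11 (v 0) + D21 (v 0) = (d1^^3) (v 0) + (d2^^3) (v 0) + 6 * v 0 * d1 (v 0)
           + 3 * d1 (u * w 0) + 3 * d1 (v 1)
    \<and> d2 (v 0) = d1 u
    \<and> d1 (w 0) = d2 u
    \<and> (D11 u + D21 u = (d1^^3) u + (d2^^3) u + d1 (u * (3 * v 0)) + d2 (u * (3 * w 0))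
         \<and> 3 * d1 u = d2 (3 * v 0))"
proof -
  interpret \<L>\<^sub>1: Lax_operator d2 d1 v using der2 der1 by unfold_locales
  interpret \<L>\<^sub>2: Lax_operator d1 d2 w using der1 der2 by unfold_locales
  have v0_d2: "d2 (v 0) = d1 u"
    using arg_cong[OF rel1, of "\<lambda>P. P 0 (-1)"] \<L>\<^sub>1.coeff_comm_L_inverse_u
    unfolding L1_def \<L>\<^sub>1.coeff_mmap_L by simp
  have w0_d1: "d1 (w 0) = d2 u"
    using arg_cong[OF rel2, of "\<lambda>P. P 0 (-1)"] \<L>\<^sub>2.coeff_comm_L_inverse_u
    unfolding L2_def \<L>\<^sub>2.coeff_mmap_L by simp
  have u_flow: "D11 u = 3 * d1 (v 0) * u + 3 * v 0 * d1 u + d1 (d1 (d1 u))"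
      "D21 u = 3 * d2 (w 0) * u + 3 * w 0 * d2 u + d2 (d2 (d2 u))"
    using u_11 u_21 \<L>\<^sub>1.adj_apply_A \<L>\<^sub>2.adj_apply_A unfolding A11_def A21_def L1_def L2_def by simp_all
  have v0_flow: "D11 (v 0) = d1 (d1 (d1 (v 0))) + 6 * v 0 * d1 (v 0) + 3 * d1 (v 1)"
      "D21 (v 0) = 3 * w 0 * d2 (v 0) + d2 (d2 (d2 (v 0))) + 3 * d1 (w 0) * u"
    using arg_cong[OF L1_11, of "\<lambda>P. P 0 (-1)"] \<L>\<^sub>1.coeff_comm_A_L
      \<L>\<^sub>1.coeff_mod_Hop_comm_transp_L[OF \<L>\<^sub>2.A_bounded \<L>\<^sub>2.A_coeffs(1-4) L1_21[unfolded A21_def L2_def L1_def]]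
    unfolding A11_def L1_def by (simp_all add: \<L>\<^sub>1.coeff_mmap_L)
  have cube: "(d ^^ 3) x = d (d (d x))" for d :: "'a \<Rightarrow> 'a" and x
    by (simp add: numeral_eq_Suc)
  show ?thesis
    unfolding cube using v0_d2 w0_d1 u_flow v0_flow
    by (simp add: derivation_simps[OF der1] derivation_simps[OF der2] algebra_simps)
qed

end
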